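(* Let $E$ be a Euclidean space. For closed subsets $V,W$ of $E$ we have $\tau(W\cap V)\geqslant\min\big(\tau(W),\tau(W\cap\partial V)\big)$.
   Context: For nonempty $A\subseteq E$, $d_A(x)=\inf_{p\in A}\|x-p\|$, and $d_\varnothing=+\infty$. For a nonempty closed $A\subseteq E$, the medial axis of $A$ is the closure of $\Delta_A=\{x\in E:\exists p\neq q\in A,\ \|x-p\|=\|x-q\|=d_A(x)\}$; the reach of $A$ at $p\in A$ is $\tau(A,p)=d_{\Delta_A}(p)$, and the reach of $A$ is $\tau(A)=\inf_{p\in A}\tau(A,p)$. By convention $\tau(\varnothing)=+\infty$. $\partial V$ is the topological boundary of $V$ in $E$. *)

theory Defs
  imports "HOL-Analysis.Analysis"
begin

definition distfun :: "'a::euclidean_space set \<Rightarrow> 'a \<Rightarrow> ereal" where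
  "distfun A x = (if A = {} then \<infinity> else ereal (infdist x A))"

definition Delta_set :: "'a::euclidean_space set \<Rightarrow> 'a set" where
  "Delta_set A = {x. \<exists>p q. p \<in> A \<and> q \<in> A \<and> p \<noteq> q \<and>
      norm (x - p) = infdist x A \<and> norm (x - q) = infdist x A}"

definition medial_axis :: "'a::euclidean_space set \<Rightarrow> 'a set" where
  "medial_axis A = closure (Delta_set A)"

definition reach_at :: "'a::euclidean_space set \<Rightarrow> 'a \<Rightarrow> ereal" where
  "reach_at A p = distfun (medial_axis A) p"

text \<open>Infimum over the empty set is +infinity, matching the convention reach {} = +infinity.\<close>
definition reach :: "'a::euclidean_space set \<Rightarrow> ereal" where
  "reach A = (INF p\<in>A. reach_at A p)"

end

theory Submission
  imports Defs
begin

text \<open>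
  Let \<open>x\<close> be a point of the medial axis of \<open>W \<inter> V\<close> at distance \<open>t\<close> below both \<open>\<tau>(W)\<close> and
  \<open>\<tau>(W \<inter> \<partial>V)\<close>, with two nearest points \<open>p \<noteq> q\<close> in \<open>W \<inter> V\<close>. Below \<open>\<tau>(W)\<close> nearest points in
  \<open>W\<close> are unique, so the nearest point \<open>u\<close> of \<open>x\<close> in \<open>W\<close> cannot lie in \<open>V\<close>. Moving \<open>y\<close> along
  the segment from \<open>x\<close> to \<open>p\<close>, the unique nearest point of \<open>y\<close> in \<open>W\<close> starts at \<open>u \<notin> V\<close> and
  ends at \<open>p\<close>; if \<open>p\<close> were interior to \<open>V\<close> it could only be reached by a jump, contradicting
  connectedness of the segment. Hence \<open>p, q \<in> \<partial>V\<close>, and \<open>x\<close> lies on the medial axis of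
  \<open>W \<inter> \<partial>V\<close> at distance \<open>t\<close>, contradicting \<open>t < \<tau>(W \<inter> \<partial>V)\<close>.
\<close>

lemma reach_le_infdist_Delta_set:
  fixes A :: "'a::euclidean_space set"
  assumes "x \<in> Delta_set A"
  shows "reach A \<le> ereal (infdist x A)"
proof -
  obtain a where a: "a \<in> A" "dist a x = infdist x A"
    using assms unfolding Delta_set_def by (auto simp: dist_norm norm_minus_commute)
  have "reach A \<le> reach_at A a"
    unfolding reach_def using a(1) by (rule INF_lower)
  also have "\<dots> = ereal (infdist a (Delta_set A))"
    using assms by (auto simp: reach_at_def distfun_def medial_axis_def infdist_eq_setdist)
  also have "\<dots> \<le> ereal (dist a x)"
    using infdist_le[OF assms] by simp
  finally show ?thesis
    using a(2) by simp
qed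

lemma reach_geI:
  fixes A :: "'a::euclidean_space set"
  assumes "\<And>x. x \<in> Delta_set A \<Longrightarrow> c \<le> ereal (infdist x A)"
  shows "c \<le> reach A"
  unfolding reach_def
proof (rule INF_greatest)
  fix a assume "a \<in> A"
  show "c \<le> reach_at A a"
  proof (cases "Delta_set A = {}")
    case False
    have "c \<le> ereal (dist a x)" if "x \<in> Delta_set A" for x
      using assms[OF that] infdist_le[OF \<open>a \<in> A\<close>, of x] by (simp add: dist_commute order_trans)
    then have "c \<le> (INF x\<in>Delta_set A. ereal (dist a x))"
      by (rule INF_greatest)
    also have "\<dots> = ereal (infdist a (Delta_set A))"
      using False by (simp add: infdist_notempty ereal_Inf' image_comp)
    finally show ?thesis
      by (simp add: reach_at_def distfun_def medial_axis_def infdist_eq_setdist)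
  qed (simp add: reach_at_def distfun_def medial_axis_def)
qed

lemma nearest_point_unique_below_reach:
  fixes W :: "'a::euclidean_space set"
  assumes "a \<in> W" "b \<in> W" "dist y a = infdist y W" "dist y b = infdist y W"
    and "ereal (infdist y W) < reach W"
  shows "a = b"
proof (rule ccontr)
  assume "a \<noteq> b"
  then have "y \<in> Delta_set W"
    using assms unfolding Delta_set_def by (auto simp: dist_norm norm_minus_commute)
  with assms(5) show False
    using reach_le_infdist_Delta_set by fastforce
qed

lemma infdist_closed_segment_nearest_point:
  fixes A :: "'a::euclidean_space set"
  assumes "p \<in> A" "dist x p = infdist x A" "y \<in> closed_segment x p"
  shows "infdist y A = dist y p"
proof (rule antisym)
  show "infdist y A \<le> dist y p"
    using assms(1) by (rule infdist_le)
  have "dist x y + dist y p = infdist x A"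
    using between[of x p y] between_mem_segment[of x p y] assms(2,3) by simp
  also have "\<dots> \<le> dist x y + infdist y A"
    using infdist_triangle[of x A y] by simp
  finally show "dist y p \<le> infdist y A"
    by simp
qed

lemma compact_points_with_nearest_point_in:
  fixes W :: "'a::euclidean_space set"
  assumes "compact S" "compact K"
  shows "compact {y \<in> S. \<exists>k\<in>K. dist y k = infdist y W}"
proof -
  let ?P = "S \<times> K \<inter> {z. dist (fst z) (snd z) = infdist (fst z) W}"
  have "compact (fst ` ?P)"
    by (intro compact_continuous_image compact_Int_closed compact_Times assms closed_Collect_eq
        continuous_intros)
  also have "fst ` ?P = {y \<in> S. \<exists>k\<in>K. dist y k = infdist y W}"
    by force
  finally show ?thesis .
qed

text \<open>
  On the segment from \<open>x\<close> to \<open>p\<close>, the points whose nearest point in \<open>W\<close> is \<open>p\<close> and those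
  having a nearest point in \<open>W\<close> outside a ball \<open>B \<subseteq> V\<close> around \<open>p\<close> form two closed sets. They
  cover the segment because \<open>p\<close> stays nearest in \<open>W \<inter> V\<close>, and they are disjoint by uniqueness
  of nearest points below the reach.
\<close>
lemma nearest_point_in_frontier:
  fixes V W :: "'a::euclidean_space set"
  assumes "closed V" "closed W"
    and p: "p \<in> W \<inter> V" "dist x p = infdist x (W \<inter> V)"
    and u: "u \<in> W" "u \<notin> V" "dist x u = infdist x W"
    and below_reach: "ereal (infdist x (W \<inter> V)) < reach W"
  shows "p \<in> frontier V"
proof (rule ccontr)
  assume "p \<notin> frontier V"
  with p(1) \<open>closed V\<close> have "p \<in> interior V"
    by (simp add: frontier_def)
  then obtain \<delta> where "\<delta> > 0" and ball_V: "ball p \<delta> \<subseteq> V"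
    by (meson open_contains_ball open_interior interior_subset subset_trans)
  define t where "t = dist x p"
  define K where "K = (W - ball p \<delta>) \<inter> cball x t"
  define S\<^sub>p where "S\<^sub>p = {y \<in> closed_segment x p. dist y p = infdist y W}"
  define S\<^sub>K where "S\<^sub>K = {y \<in> closed_segment x p. \<exists>k\<in>K. dist y k = infdist y W}"
  have infdist_W: "infdist y W \<le> dist y p" for y
    using p(1) infdist_le by blast
  have unique: "a = b"
    if "y \<in> closed_segment x p" "a \<in> W" "b \<in> W"
      "dist y a = infdist y W" "dist y b = infdist y W" for y a b
  proof (rule nearest_point_unique_below_reach[OF that(2-5)])
    have "infdist y W \<le> t"
      using infdist_W[of y] dist_in_closed_segment[OF that(1)] by (simp add: t_def dist_commute)
    with below_reach p(2) show "ereal (infdist y W) < reach W"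
      by (metis t_def ereal_less_eq(3) order_le_less_trans)
  qed
  have closed_S\<^sub>p: "closed S\<^sub>p"
    unfolding S\<^sub>p_def by (intro closed_Collect_conj closed_Collect_eq continuous_intros) (simp add: closed_segment)
  have closed_S\<^sub>K: "closed S\<^sub>K"
  proof -
    have "compact K"
      unfolding K_def using \<open>closed W\<close> by (intro closed_Int_compact closed_Diff open_ball compact_cball)
    then show ?thesis
      unfolding S\<^sub>K_def by (intro compact_imp_closed compact_points_with_nearest_point_in compact_segment)
  qed
  have cover: "closed_segment x p \<subseteq> S\<^sub>p \<union> S\<^sub>K"
  proof
    fix y assume y: "y \<in> closed_segment x p"
    obtain w where w: "w \<in> W" "infdist y W = dist y w"
      using infdist_attains_inf[OF \<open>closed W\<close>] p(1) by blast
    show "y \<in> S\<^sub>p \<union> S\<^sub>K"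
    proof (cases "w \<in> ball p \<delta>")
      case True
      with ball_V w(1) have "infdist y (W \<inter> V) \<le> dist y w"
        by (intro infdist_le) auto
      then have "dist y p = infdist y W"
        using infdist_closed_segment_nearest_point[OF p y] infdist_W[of y] w(2) by simp
      with y show ?thesis
        unfolding S\<^sub>p_def by simp
    next
      case False
      have "dist x w \<le> dist x y + dist y p"
        using dist_triangle[of x w y] infdist_W[of y] w(2) by simp
      also have "\<dots> = t"
        using between[of x p y] between_mem_segment[of x p y] y by (simp add: t_def)
      finally have "w \<in> K"
        using False w(1) by (simp add: K_def)
      with y w(2) show ?thesis
        unfolding S\<^sub>K_def by auto
    qed
  qed
  have disjoint: "S\<^sub>p \<inter> S\<^sub>K \<inter> closed_segment x p = {}"
  proof -
    have False if y: "y \<in> S\<^sub>p" "y \<in> S\<^sub>K" for y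
    proof -
      obtain k where "y \<in> closed_segment x p" "k \<in> K" "dist y k = infdist y W"
        "dist y p = infdist y W"
        using y unfolding S\<^sub>p_def S\<^sub>K_def by blast
      moreover from this have "k = p"
        using unique[of y k p] p(1) by (simp add: K_def)
      ultimately show False
        using \<open>\<delta> > 0\<close> by (simp add: K_def)
    qed
    then show ?thesis
      by blast
  qed
  have "p \<in> S\<^sub>p \<inter> closed_segment x p"
    using p(1) by (simp add: S\<^sub>p_def infdist_zero)
  moreover have "x \<in> S\<^sub>K \<inter> closed_segment x p"
  proof -
    have "dist x u \<le> t"
      using u(3) infdist_le[of p W x] p(1) by (simp add: t_def)
    with u ball_V have "u \<in> K"
      by (auto simp: K_def)
    with u(3) show ?thesis
      unfolding S\<^sub>K_def by auto
  qed
  ultimately show False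
    using connected_closedD[OF connected_segment disjoint cover closed_S\<^sub>p closed_S\<^sub>K] by blast
qed

lemma min_reach_le_infdist_Delta_set_Int:
  fixes V W :: "'a::euclidean_space set"
  assumes "closed V" "closed W" and x: "x \<in> Delta_set (W \<inter> V)"
  shows "min (reach W) (reach (W \<inter> frontier V)) \<le> ereal (infdist x (W \<inter> V))"
proof (rule ccontr)
  define t where "t = infdist x (W \<inter> V)"
  assume "\<not> ?thesis"
  then have below_W: "ereal t < reach W" and below_frontier: "ereal t < reach (W \<inter> frontier V)"
    by (auto simp: t_def not_le)
  obtain p q where pq: "p \<in> W \<inter> V" "q \<in> W \<inter> V" "p \<noteq> q" "dist x p = t" "dist x q = t"
    using x unfolding Delta_set_def t_def by (auto simp: dist_norm)
  obtain u where u: "u \<in> W" "dist x u = infdist x W"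
    using infdist_attains_inf[OF \<open>closed W\<close>] pq(1) by (metis IntE empty_iff)
  have "infdist x W \<le> t"
    using infdist_le[of p W x] pq by simp
  have "u \<notin> V"
  proof
    assume "u \<in> V"
    with u \<open>infdist x W \<le> t\<close> have "infdist x W = t"
      using infdist_le[of u "W \<inter> V" x] by (simp add: t_def)
    then have "ereal (infdist x W) < reach W" "dist x p = infdist x W" "dist x q = infdist x W"
      using below_W pq(4,5) by simp_all
    then have "p = u" "q = u"
      using nearest_point_unique_below_reach[of _ W u x] pq(1,2) u by (metis IntD1)+
    with pq(3) show False
      by simp
  qed
  have frontier_pq: "p \<in> W \<inter> frontier V" "q \<in> W \<inter> frontier V"
    using nearest_point_in_frontier[OF assms(1,2) _ _ u(1) \<open>u \<notin> V\<close> u(2)] pq(1,2,4,5) below_W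
    by (simp_all add: t_def)
  have "W \<inter> frontier V \<subseteq> W \<inter> V"
    using \<open>closed V\<close> frontier_subset_closed by blast
  then have "infdist x (W \<inter> frontier V) = t"
    using infdist_le[OF frontier_pq(1), of x] infdist_mono[of "W \<inter> frontier V" "W \<inter> V" x]
      frontier_pq(1) pq(4) unfolding t_def by (intro antisym) auto
  moreover have "x \<in> Delta_set (W \<inter> frontier V)"
    using frontier_pq pq(3-5) calculation unfolding Delta_set_def by (auto simp: dist_norm)
  ultimately show False
    using reach_le_infdist_Delta_set below_frontier by fastforce
qed

theorem theorem2p4:
  fixes V W :: "'a::euclidean_space set"
  assumes "closed V" and "closed W"
  shows "reach (W \<inter> V) \<ge> min (reach W) (reach (W \<inter> frontier V))"
  using min_reach_le_infdist_Delta_set_Int[OF assms] by (rule reach_geI)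

end
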